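(* Let $S$ be a square-free semigroup with idempotent set $E$, $D$ a division ring, and let $(\alpha,\xi),(\beta,\zeta)\in Z^2(S,D^* )$ be normal 2-cocycles. Let $\gamma: D^{\beta}_{\zeta}S\to D^{\alpha}_{\xi}S$ be a ring isomorphism with $\gamma(E)=E$. Then there exist an automorphism $\phi$ of the semigroup $S$ and $(\mu,\eta)\in F^0(S,\mathrm{Aut}(D))\times F^1(S,D^* )$ such that $\gamma(ds)=\mu_e(d)\,\eta(s)\,\phi(s)$ for all $d\in D$ and all $s=e\cdot s\cdot f\in S^*$.
   Context: $D$ is a division ring, $D^*$ its group of units, $\mathrm{Aut}(D)$ its group of ring automorphisms, and for $d\in D^*$, $\rho_d(x)=dxd^{-1}$. A square-free semigroup is a semigroup $S$ (product $s\cdot t$) with zero $\theta$ together with a finite set $E\subseteq S$ of nonzero pairwise orthogonal idempotents such that $S=\bigcup_{e,f\in E}e\cdot S\cdot f$ and $|e\cdot S\cdot f\setminus\{\theta\}|\le 1$ for all $e,f\in E$. $S^*=S\setminus\{\theta\}$; each $s\in S^*$ satisfies $s=e\cdot s\cdot f$ for unique $e,f\in E$. Put $S^{<0>}=E$, $S^{<n>}=\{(s_1,\dots,s_n)\in S^n: s_1\cdots s_n\ne\theta\}$; $F^n(S,G)$ is the group of functions $S^{<n>}\to G$. Write $\alpha_s=\alpha(s)$, $\mu_e=\mu(e)$. A 2-cocycle is a pair $(\alpha,\xi)\in F^1(S,\mathrm{Aut}(D))\times F^2(S,D^* )$ with $\alpha_s(\xi(t,u))\xi(s,t\cdot u)=\xi(s,t)\xi(s\cdot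 t,u)$ for $(s,t,u)\in S^{<3>}$ and $\alpha_s\circ\alpha_t=\rho_{\xi(s,t)}\circ\alpha_{s\cdot t}$ for $(s,t)\in S^{<2>}$; $Z^2(S,D^* )$ is their set. It is normal if $\alpha_e=1_D$ and $\xi(e,e)=1$ for all $e\in E$. For $(\alpha,\xi)\in Z^2(S,D^* )$, $D^{\alpha}_{\xi}S$ is the ring which is the left $D$-vector space with basis $S^*$ and multiplication extended by distributivity from $(d_1s)(d_2t)=d_1\alpha_s(d_2)\xi(s,t)\,(s\cdot t)$ if $s\cdot t\ne\theta$ and $0$ otherwise; $E$ is regarded as a subset of this ring. *)

theory Defs
  imports Main
begin

definition square_free_semigroup ::
  "'s set \<Rightarrow> ('s \<Rightarrow> 's \<Rightarrow> 's) \<Rightarrow> 's \<Rightarrow> 's set \<Rightarrow> bool" where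
  "square_free_semigroup S m z E \<longleftrightarrow>
     (\<forall>x\<in>S. \<forall>y\<in>S. m x y \<in> S) \<and>
     (\<forall>x\<in>S. \<forall>y\<in>S. \<forall>w\<in>S. m (m x y) w = m x (m y w)) \<and>
     z \<in> S \<and> (\<forall>x\<in>S. m z x = z \<and> m x z = z) \<and>
     finite E \<and> E \<subseteq> S - {z} \<and>
     (\<forall>e\<in>E. m e e = e) \<and>
     (\<forall>e\<in>E. \<forall>f\<in>E. e \<noteq> f \<longrightarrow> m e f = z) \<and>
     S = (\<Union>e\<in>E. \<Union>f\<in>E. {m (m e s) f | s. s \<in> S}) \<and>
     (\<forall>e\<in>E. \<forall>f\<in>E. \<forall>x y.
        x \<in> {m (m e s) f | s. s \<in> S} - {z} \<longrightarrow>
        y \<in> {m (m e s) f | s. s \<in> S} - {z} \<longrightarrow> x = y)"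

definition left_idem :: "('s \<Rightarrow> 's \<Rightarrow> 's) \<Rightarrow> 's set \<Rightarrow> 's \<Rightarrow> 's" where
  "left_idem m E s = (THE e. e \<in> E \<and> (\<exists>f\<in>E. s = m (m e s) f))"

definition ring_aut :: "('d::division_ring \<Rightarrow> 'd) \<Rightarrow> bool" where
  "ring_aut f \<longleftrightarrow> bij f \<and> (\<forall>x y. f (x + y) = f x + f y) \<and> (\<forall>x y. f (x * y) = f x * f y)"

definition rho :: "'d::division_ring \<Rightarrow> 'd \<Rightarrow> 'd" where
  "rho d x = d * x * inverse d"

definition two_cocycle ::
  "'s set \<Rightarrow> ('s \<Rightarrow> 's \<Rightarrow> 's) \<Rightarrow> 's \<Rightarrow> ('s \<Rightarrow> 'd \<Rightarrow> 'd) \<Rightarrow> ('s \<Rightarrow> 's \<Rightarrow> 'd::division_ring) \<Rightarrow> bool" where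
  "two_cocycle S m z \<alpha> \<xi> \<longleftrightarrow>
     (\<forall>s\<in>S. s \<noteq> z \<longrightarrow> ring_aut (\<alpha> s)) \<and>
     (\<forall>s\<in>S. \<forall>t\<in>S. m s t \<noteq> z \<longrightarrow> \<xi> s t \<noteq> 0) \<and>
     (\<forall>s\<in>S. \<forall>t\<in>S. \<forall>u\<in>S. m (m s t) u \<noteq> z \<longrightarrow>
        \<alpha> s (\<xi> t u) * \<xi> s (m t u) = \<xi> s t * \<xi> (m s t) u) \<and>
     (\<forall>s\<in>S. \<forall>t\<in>S. m s t \<noteq> z \<longrightarrow> \<alpha> s \<circ> \<alpha> t = rho (\<xi> s t) \<circ> \<alpha> (m s t))"

definition normal_cocycle ::
  "'s set \<Rightarrow> ('s \<Rightarrow> 'd \<Rightarrow> 'd) \<Rightarrow> ('s \<Rightarrow> 's \<Rightarrow> 'd::division_ring) \<Rightarrow> bool" where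
  "normal_cocycle E \<alpha> \<xi> \<longleftrightarrow> (\<forall>e\<in>E. \<alpha> e = id \<and> \<xi> e e = 1)"

text \<open>The twisted semigroup ring D^alpha_xi S: elements are coefficient functions
S \<Rightarrow> D vanishing outside S^* (a left D-space with basis S^*), addition pointwise.\<close>
definition tw_carrier :: "'s set \<Rightarrow> 's \<Rightarrow> ('s \<Rightarrow> 'd::zero) set" where
  "tw_carrier S z = {x. \<forall>u. u \<notin> S - {z} \<longrightarrow> x u = 0}"

definition tw_mult ::
  "'s set \<Rightarrow> ('s \<Rightarrow> 's \<Rightarrow> 's) \<Rightarrow> 's \<Rightarrow> ('s \<Rightarrow> 'd \<Rightarrow> 'd) \<Rightarrow> ('s \<Rightarrow> 's \<Rightarrow> 'd::division_ring)
   \<Rightarrow> ('s \<Rightarrow> 'd) \<Rightarrow> ('s \<Rightarrow> 'd) \<Rightarrow> ('s \<Rightarrow> 'd)" where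
  "tw_mult S m z \<alpha> \<xi> x y = (\<lambda>u. if u \<in> S - {z} then
      (\<Sum>(s, t) \<in> {(s, t). s \<in> S - {z} \<and> t \<in> S - {z} \<and> m s t = u}. x s * \<alpha> s (y t) * \<xi> s t)
    else 0)"

definition basis_elt :: "'d::zero \<Rightarrow> 's \<Rightarrow> ('s \<Rightarrow> 'd)" where
  "basis_elt d s = (\<lambda>u. if u = s then d else 0)"

definition tw_ring_iso ::
  "'s set \<Rightarrow> ('s \<Rightarrow> 's \<Rightarrow> 's) \<Rightarrow> 's \<Rightarrow> ('s \<Rightarrow> 'd \<Rightarrow> 'd) \<Rightarrow> ('s \<Rightarrow> 's \<Rightarrow> 'd::division_ring)
   \<Rightarrow> ('s \<Rightarrow> 'd \<Rightarrow> 'd) \<Rightarrow> ('s \<Rightarrow> 's \<Rightarrow> 'd) \<Rightarrow> (('s \<Rightarrow> 'd) \<Rightarrow> ('s \<Rightarrow> 'd)) \<Rightarrow> bool" where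
  "tw_ring_iso S m z \<beta> \<zeta> \<alpha> \<xi> \<gamma> \<longleftrightarrow>
     bij_betw \<gamma> (tw_carrier S z) (tw_carrier S z) \<and>
     (\<forall>x\<in>tw_carrier S z. \<forall>y\<in>tw_carrier S z. \<gamma> (\<lambda>u. x u + y u) = (\<lambda>u. \<gamma> x u + \<gamma> y u)) \<and>
     (\<forall>x\<in>tw_carrier S z. \<forall>y\<in>tw_carrier S z.
        \<gamma> (tw_mult S m z \<beta> \<zeta> x y) = tw_mult S m z \<alpha> \<xi> (\<gamma> x) (\<gamma> y))"

definition semigroup_aut :: "'s set \<Rightarrow> ('s \<Rightarrow> 's \<Rightarrow> 's) \<Rightarrow> ('s \<Rightarrow> 's) \<Rightarrow> bool" where
  "semigroup_aut S m \<phi> \<longleftrightarrow> bij_betw \<phi> S S \<and> (\<forall>s\<in>S. \<forall>t\<in>S. \<phi> (m s t) = m (\<phi> s) (\<phi> t))"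

end

theory Submission
  imports Defs
begin

text \<open>Each corner \<open>e R f\<close> of a twisted semigroup ring \<open>R = D\<^sup>\<alpha>\<^sub>\<xi> S\<close> of a
square-free semigroup is the line \<open>D s\<close> spanned by the unique nonzero \<open>s = e s f\<close>.
Since \<gamma> permutes the idempotents, it maps the corner of \<open>s\<close> onto a corner of the
target, so \<open>\<gamma>(d s)\<close> is a multiple of a single basis element \<open>\<phi>(s)\<close>. On \<open>e R e = D e\<close>
this defines a ring automorphism \<open>\<mu>\<^sub>e\<close> of \<open>D\<close>, and \<open>d s = (d e)(1 s)\<close> gives
\<open>\<gamma>(d s) = \<mu>\<^sub>e(d) \<eta>(s) \<phi>(s)\<close> with \<open>\<eta>(s)\<close> the coefficient of \<open>\<gamma>(1 s)\<close>.
Comparing \<open>\<gamma>((1 s)(1 t))\<close> with \<open>\<gamma>(1 s) \<gamma>(1 t)\<close> shows that \<open>\<phi>\<close> is multiplicative,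
injectivity of \<gamma> makes \<open>\<phi>\<close> injective, and \<open>S\<close> is finite.\<close>

section \<open>Ring automorphisms of a division ring\<close>

lemma ring_aut_zero: "ring_aut f \<Longrightarrow> f 0 = (0::'d::division_ring)"
  unfolding ring_aut_def by (metis add_cancel_right_right)

lemma ring_aut_nonzero: "ring_aut f \<Longrightarrow> x \<noteq> 0 \<Longrightarrow> f x \<noteq> (0::'d::division_ring)"
  using ring_aut_zero[of f] unfolding ring_aut_def bij_def inj_def by metis

lemma ring_aut_one: "ring_aut f \<Longrightarrow> f 1 = (1::'d::division_ring)"
proof -
  assume f: "ring_aut f"
  have "f 1 * f 1 = f 1" using f unfolding ring_aut_def by (metis mult_1_left)
  moreover have "f 1 \<noteq> 0" using ring_aut_nonzero[OF f] by simp
  ultimately show ?thesis by (metis mult_cancel_right2)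
qed

lemma nonzero_idempotent_eq_one: "x * x = x \<Longrightarrow> x \<noteq> 0 \<Longrightarrow> x = (1::'d::division_ring)"
  by (metis mult_cancel_right2)

section \<open>Square-free semigroups\<close>

locale sf_semigroup =
  fixes S :: "'s set" and m :: "'s \<Rightarrow> 's \<Rightarrow> 's" and z :: 's and E :: "'s set"
  assumes square_free: "square_free_semigroup S m z E"
begin

lemmas square_free_unfolded = square_free[unfolded square_free_semigroup_def]

lemma closed: "x \<in> S \<Longrightarrow> y \<in> S \<Longrightarrow> m x y \<in> S"
  using square_free_unfolded by (elim conjE) blast

lemma assoc: "x \<in> S \<Longrightarrow> y \<in> S \<Longrightarrow> w \<in> S \<Longrightarrow> m (m x y) w = m x (m y w)"
  using square_free_unfolded by (elim conjE) blast

lemma zero_left: "x \<in> S \<Longrightarrow> m z x = z"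
  using square_free_unfolded by (elim conjE) blast

lemma zero_right: "x \<in> S \<Longrightarrow> m x z = z"
  using square_free_unfolded by (elim conjE) blast

lemma finite_idems: "finite E"
  using square_free_unfolded by (elim conjE) blast

lemma idem_in_carrier: "e \<in> E \<Longrightarrow> e \<in> S - {z}"
  using square_free_unfolded by (elim conjE) blast

lemma idem: "e \<in> E \<Longrightarrow> m e e = e"
  using square_free_unfolded by (elim conjE) blast

lemma idem_orth: "e \<in> E \<Longrightarrow> f \<in> E \<Longrightarrow> e \<noteq> f \<Longrightarrow> m e f = z"
  using square_free_unfolded by (elim conjE) blast

lemma carrier_blocks:
  assumes s: "s \<in> S" shows "\<exists>e\<in>E. \<exists>f\<in>E. \<exists>t\<in>S. s = m (m e t) f"
proof -
  have "S = (\<Union>e\<in>E. \<Union>f\<in>E. {m (m e t) f | t. t \<in> S})"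
    using square_free_unfolded by (elim conjE)
  then have "s \<in> (\<Union>e\<in>E. \<Union>f\<in>E. {m (m e t) f | t. t \<in> S})"
    using s by (rule subst)
  then show ?thesis by blast
qed

lemma block_unique:
  assumes "e \<in> E" "f \<in> E" "u \<in> S - {z}" "v \<in> S - {z}"
    and "m e u = u" "m u f = u" "m e v = v" "m v f = v"
  shows "u = v"
proof -
  have "u \<in> {m (m e s) f | s. s \<in> S} - {z}" "v \<in> {m (m e s) f | s. s \<in> S} - {z}"
    using assms by (metis (mono_tags, lifting) DiffD1 DiffD2 DiffI mem_Collect_eq)+
  then show ?thesis
    using assms(1,2) square_free_unfolded by (elim conjE) blast
qed

lemma idem_left_absorb: "e \<in> E \<Longrightarrow> t \<in> S \<Longrightarrow> m e t \<noteq> z \<Longrightarrow> m e t = t"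
proof -
  assume et: "e \<in> E" "t \<in> S" "m e t \<noteq> z"
  obtain e' f u where t: "e' \<in> E" "f \<in> E" "u \<in> S" "t = m (m e' u) f"
    using carrier_blocks[OF et(2)] by blast
  have "m e t = m (m (m e e') u) f"
    using et t idem_in_carrier by (simp add: assoc closed)
  show ?thesis
  proof (cases "e = e'")
    case True
    then show ?thesis using \<open>m e t = _\<close> t idem by simp
  next
    case False
    then show ?thesis using \<open>m e t = _\<close> et t idem_orth idem_in_carrier zero_left closed by simp
  qed
qed

lemma idem_right_absorb: "f \<in> E \<Longrightarrow> t \<in> S \<Longrightarrow> m t f \<noteq> z \<Longrightarrow> m t f = t"
proof -
  assume tf: "f \<in> E" "t \<in> S" "m t f \<noteq> z"
  obtain e f' u where t: "e \<in> E" "f' \<in> E" "u \<in> S" "t = m (m e u) f'"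
    using carrier_blocks[OF tf(2)] by blast
  have "m t f = m (m e u) (m f' f)"
    using tf t idem_in_carrier by (simp add: assoc closed)
  show ?thesis
  proof (cases "f = f'")
    case True
    then show ?thesis using \<open>m t f = _\<close> t idem by simp
  next
    case False
    then show ?thesis using \<open>m t f = _\<close> tf t idem_orth idem_in_carrier zero_right closed by simp
  qed
qed

lemma exists_block: "s \<in> S - {z} \<Longrightarrow> \<exists>e\<in>E. \<exists>f\<in>E. m e s = s \<and> m s f = s"
proof -
  assume s: "s \<in> S - {z}"
  obtain e f t where "e \<in> E" "f \<in> E" "t \<in> S" "s = m (m e t) f"
    using carrier_blocks s by blast
  moreover have "m e s = s" "m s f = s"
  proof -
    have eS: "e \<in> S" "f \<in> S" using calculation idem_in_carrier by auto
    show "m e s = s"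
      using calculation eS assoc[of e "m e t" f] assoc[of e e t] idem by (simp add: closed)
    show "m s f = s"
      using calculation eS assoc[of "m e t" f f] idem by (simp add: closed)
  qed
  ultimately show ?thesis by blast
qed

lemma finite_carrier: "finite S"
proof -
  have "\<forall>s\<in>S - {z}. \<exists>p. fst p \<in> E \<and> snd p \<in> E \<and> m (fst p) s = s \<and> m s (snd p) = s"
    using exists_block by fastforce
  then obtain blk where blk: "\<And>s. s \<in> S - {z} \<Longrightarrow>
      fst (blk s) \<in> E \<and> snd (blk s) \<in> E \<and> m (fst (blk s)) s = s \<and> m s (snd (blk s)) = s"
    by metis
  have "inj_on blk (S - {z})"
    by (rule inj_onI) (metis blk block_unique)
  moreover have "blk ` (S - {z}) \<subseteq> E \<times> E"
    using blk by (metis image_subsetI mem_Times_iff)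
  ultimately have "finite (S - {z})"
    using inj_on_finite finite_cartesian_product[OF finite_idems finite_idems] by blast
  then show ?thesis using finite_Diff2[of "{z}" S] by blast
qed

lemma left_idem_eq:
  assumes e: "e \<in> E" and s: "s \<in> S - {z}" and es: "m e s = s"
  shows "left_idem m E s = e"
  unfolding left_idem_def
proof (rule the_equality)
  obtain f where "f \<in> E" "m s f = s" using exists_block[OF s] by blast
  then show "e \<in> E \<and> (\<exists>f\<in>E. s = m (m e s) f)" using e es by metis
next
  fix e' assume "e' \<in> E \<and> (\<exists>f\<in>E. s = m (m e' s) f)"
  then obtain f' where e': "e' \<in> E" "f' \<in> E" "s = m (m e' s) f'" by blast
  have "m e' s \<noteq> z"
  proof
    assume "m e' s = z"
    then have "s = m z f'" using e' by simp
    then show False using s e' zero_left idem_in_carrier by auto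
  qed
  then have "m e' s = s" using e' s idem_left_absorb by blast
  then have "m (m e' e) s = s"
    using e e' s es idem_in_carrier assoc[of e' e s] by simp
  show "e' = e"
  proof (rule ccontr)
    assume "e' \<noteq> e"
    then have "m e' e = z" using e e' idem_orth by blast
    then show False using \<open>m (m e' e) s = s\<close> s zero_left by auto
  qed
qed

lemma left_idem: "s \<in> S - {z} \<Longrightarrow> left_idem m E s \<in> E \<and> m (left_idem m E s) s = s"
  by (metis exists_block left_idem_eq)

end

section \<open>Twisted semigroup rings\<close>

lemma basis_elt_carrier: "s \<in> S - {z} \<Longrightarrow> basis_elt d s \<in> tw_carrier S z"
  unfolding tw_carrier_def basis_elt_def by auto

lemma tw_mult_carrier: "tw_mult S m z \<alpha> \<xi> x y \<in> tw_carrier S z"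
  unfolding tw_mult_def tw_carrier_def by auto

lemma basis_elt_zero [simp]: "basis_elt 0 s = (\<lambda>u. 0)"
  unfolding basis_elt_def by simp

lemma basis_elt_eq_zero_iff: "basis_elt c s = (\<lambda>u. 0) \<longleftrightarrow> c = 0"
  unfolding basis_elt_def by (metis (full_types))

lemma basis_elt_eq_iff: "basis_elt c s = basis_elt d t \<longleftrightarrow> c = d \<and> (c = 0 \<or> s = t)"
  unfolding basis_elt_def by (metis (mono_tags, opaque_lifting))

locale twisted_ring = sf_semigroup S m z E for S m z E +
  fixes \<alpha> :: "'s \<Rightarrow> 'd::division_ring \<Rightarrow> 'd" and \<xi> :: "'s \<Rightarrow> 's \<Rightarrow> 'd"
  assumes cocycle: "two_cocycle S m z \<alpha> \<xi>" and normal: "normal_cocycle E \<alpha> \<xi>"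
begin

lemma twist_ring_aut: "s \<in> S - {z} \<Longrightarrow> ring_aut (\<alpha> s)"
  and cocycle_nonzero: "s \<in> S \<Longrightarrow> t \<in> S \<Longrightarrow> m s t \<noteq> z \<Longrightarrow> \<xi> s t \<noteq> 0"
  and cocycle_identity: "s \<in> S \<Longrightarrow> t \<in> S \<Longrightarrow> u \<in> S \<Longrightarrow> m (m s t) u \<noteq> z \<Longrightarrow>
        \<alpha> s (\<xi> t u) * \<xi> s (m t u) = \<xi> s t * \<xi> (m s t) u"
  using cocycle unfolding two_cocycle_def by blast+

lemma twist_idem: "e \<in> E \<Longrightarrow> \<alpha> e = id"
  and cocycle_idem: "e \<in> E \<Longrightarrow> \<xi> e e = 1"
  using normal unfolding normal_cocycle_def by blast+

lemma cocycle_idem_left: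
  assumes e: "e \<in> E" and t: "t \<in> S - {z}" "m e t = t"
  shows "\<xi> e t = 1"
proof (rule nonzero_idempotent_eq_one)
  have "\<alpha> e (\<xi> e t) * \<xi> e (m e t) = \<xi> e e * \<xi> (m e e) t"
    using cocycle_identity[of e e t] e t idem_in_carrier idem by simp
  then show "\<xi> e t * \<xi> e t = \<xi> e t"
    using e t twist_idem cocycle_idem idem by simp
  show "\<xi> e t \<noteq> 0" using cocycle_nonzero[of e t] e t idem_in_carrier by simp
qed

lemma cocycle_idem_right:
  assumes f: "f \<in> E" and t: "t \<in> S - {z}" "m t f = t"
  shows "\<xi> t f = 1"
proof (rule nonzero_idempotent_eq_one)
  have "\<alpha> t (\<xi> f f) * \<xi> t (m f f) = \<xi> t f * \<xi> (m t f) f"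
    using cocycle_identity[of t f f] f t idem_in_carrier idem by simp
  then show "\<xi> t f * \<xi> t f = \<xi> t f"
    using f t cocycle_idem idem ring_aut_one[OF twist_ring_aut] by simp
  show "\<xi> t f \<noteq> 0" using cocycle_nonzero[of t f] f t idem_in_carrier by simp
qed

abbreviation tmult :: "('s \<Rightarrow> 'd) \<Rightarrow> ('s \<Rightarrow> 'd) \<Rightarrow> ('s \<Rightarrow> 'd)" where
  "tmult \<equiv> tw_mult S m z \<alpha> \<xi>"

lemma finite_factorizations: "finite {(s, t). s \<in> S - {z} \<and> t \<in> S - {z} \<and> m s t = u}"
  by (rule finite_subset[of _ "S \<times> S"]) (auto simp: finite_carrier)

lemma tmult_basis:
  assumes s: "s \<in> S - {z}" and t: "t \<in> S - {z}"
  shows "tmult (basis_elt a s) (basis_elt b t) =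
    basis_elt (if m s t = z then 0 else a * \<alpha> s b * \<xi> s t) (m s t)"
proof
  fix u
  let ?P = "{(s, t). s \<in> S - {z} \<and> t \<in> S - {z} \<and> m s t = u}"
  have "(\<Sum>(s', t') \<in> ?P. basis_elt a s s' * \<alpha> s' (basis_elt b t t') * \<xi> s' t')
      = (\<Sum>p \<in> ?P. if p = (s, t) then a * \<alpha> s b * \<xi> s t else 0)"
  proof (rule sum.cong[OF refl])
    fix p assume "p \<in> ?P"
    then obtain s' t' where p: "p = (s', t')" "s' \<in> S - {z}" by blast
    show "(case p of (s', t') \<Rightarrow> basis_elt a s s' * \<alpha> s' (basis_elt b t t') * \<xi> s' t')
      = (if p = (s, t) then a * \<alpha> s b * \<xi> s t else 0)"
      using p ring_aut_zero[OF twist_ring_aut[of s']] by (auto simp: basis_elt_def)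
  qed
  also have "\<dots> = (if (s, t) \<in> ?P then a * \<alpha> s b * \<xi> s t else 0)"
    by (rule sum.delta[OF finite_factorizations])
  finally show "tmult (basis_elt a s) (basis_elt b t) u =
    basis_elt (if m s t = z then 0 else a * \<alpha> s b * \<xi> s t) (m s t) u"
    using s t unfolding tw_mult_def by (auto simp: basis_elt_def closed)
qed

lemma tmult_idem_left:
  assumes e: "e \<in> E"
  shows "tmult (basis_elt 1 e) y = (\<lambda>u. if u \<in> S - {z} \<and> m e u = u then y u else 0)"
proof
  fix u
  show "tmult (basis_elt 1 e) y u = (if u \<in> S - {z} \<and> m e u = u then y u else 0)"
  proof (cases "u \<in> S - {z}")
    case False
    then have "(u \<in> S - {z}) = False" by blast
    then show ?thesis unfolding tw_mult_def by (simp only: if_False simp_thms)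
  next
    case u: True
    let ?P = "{(s, t). s \<in> S - {z} \<and> t \<in> S - {z} \<and> m s t = u}"
    have "(\<Sum>(s, t) \<in> ?P. basis_elt 1 e s * \<alpha> s (y t) * \<xi> s t)
        = (\<Sum>p \<in> ?P. if p = (e, u) then y u else 0)"
    proof (rule sum.cong[OF refl])
      fix p assume "p \<in> ?P"
      then obtain s t where p: "p = (s, t)" "s \<in> S - {z}" "t \<in> S - {z}" "m s t = u"
        by blast
      show "(case p of (s, t) \<Rightarrow> basis_elt 1 e s * \<alpha> s (y t) * \<xi> s t)
        = (if p = (e, u) then y u else 0)"
      proof (cases "s = e")
        case True
        then have "t = u" using idem_left_absorb[OF e, of t] p u by auto
        then show ?thesis using p True e twist_idem cocycle_idem_left[OF e, of u]
          by (auto simp: basis_elt_def)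
      qed (use p in \<open>auto simp: basis_elt_def\<close>)
    qed
    also have "\<dots> = (if (e, u) \<in> ?P then y u else 0)"
      by (rule sum.delta[OF finite_factorizations])
    finally show ?thesis using u e idem_in_carrier unfolding tw_mult_def by auto
  qed
qed

lemma tmult_idem_right:
  assumes f: "f \<in> E"
  shows "tmult y (basis_elt 1 f) = (\<lambda>u. if u \<in> S - {z} \<and> m u f = u then y u else 0)"
proof
  fix u
  show "tmult y (basis_elt 1 f) u = (if u \<in> S - {z} \<and> m u f = u then y u else 0)"
  proof (cases "u \<in> S - {z}")
    case False
    then have "(u \<in> S - {z}) = False" by blast
    then show ?thesis unfolding tw_mult_def by (simp only: if_False simp_thms)
  next
    case u: True
    let ?P = "{(s, t). s \<in> S - {z} \<and> t \<in> S - {z} \<and> m s t = u}"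
    have "(\<Sum>(s, t) \<in> ?P. y s * \<alpha> s (basis_elt 1 f t) * \<xi> s t)
        = (\<Sum>p \<in> ?P. if p = (u, f) then y u else 0)"
    proof (rule sum.cong[OF refl])
      fix p assume "p \<in> ?P"
      then obtain s t where p: "p = (s, t)" "s \<in> S - {z}" "t \<in> S - {z}" "m s t = u"
        by blast
      show "(case p of (s, t) \<Rightarrow> y s * \<alpha> s (basis_elt 1 f t) * \<xi> s t)
        = (if p = (u, f) then y u else 0)"
      proof (cases "t = f")
        case True
        then have "s = u" using idem_right_absorb[OF f, of s] p u by auto
        then show ?thesis
          using p True f ring_aut_one[OF twist_ring_aut] cocycle_idem_right[OF f, of u]
          by (auto simp: basis_elt_def)
      next
        case False
        then show ?thesis using p ring_aut_zero[OF twist_ring_aut] by (auto simp: basis_elt_def)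
      qed
    qed
    also have "\<dots> = (if (u, f) \<in> ?P then y u else 0)"
      by (rule sum.delta[OF finite_factorizations])
    finally show ?thesis using u f idem_in_carrier unfolding tw_mult_def by auto
  qed
qed

lemma tmult_idem_corner:
  assumes e: "e \<in> E"
  shows "tmult (tmult (basis_elt 1 e) y) (basis_elt 1 e) = basis_elt (y e) e"
proof
  fix u
  have "u = e" if "u \<in> S - {z}" "m e u = u" "m u e = u"
    using block_unique[OF e e that(1) idem_in_carrier[OF e]] that idem[OF e] by blast
  then show "tmult (tmult (basis_elt 1 e) y) (basis_elt 1 e) u = basis_elt (y e) e u"
    unfolding tmult_idem_left[OF e] tmult_idem_right[OF e]
    using e idem idem_in_carrier by (auto simp: basis_elt_def)
qed

end

section \<open>Isomorphisms that permute the idempotents\<close>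

locale twisted_ring_iso =
  A: twisted_ring S m z E \<alpha> \<xi> + B: twisted_ring S m z E \<beta> \<zeta>
  for S :: "'s set" and m z E and \<alpha> \<beta> :: "'s \<Rightarrow> 'd::division_ring \<Rightarrow> 'd" and \<xi> \<zeta> +
  fixes \<gamma> :: "('s \<Rightarrow> 'd) \<Rightarrow> ('s \<Rightarrow> 'd)"
  assumes iso: "tw_ring_iso S m z \<beta> \<zeta> \<alpha> \<xi> \<gamma>"
    and idems_preserved: "(\<lambda>e. \<gamma> (basis_elt 1 e)) ` E = (\<lambda>e. basis_elt 1 e) ` E"
begin

lemmas iso_unfolded = iso[unfolded tw_ring_iso_def]

lemma gamma_bij: "bij_betw \<gamma> (tw_carrier S z) (tw_carrier S z)"
  using iso_unfolded by (elim conjE)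

lemma gamma_add: "x \<in> tw_carrier S z \<Longrightarrow> y \<in> tw_carrier S z \<Longrightarrow>
    \<gamma> (\<lambda>u. x u + y u) = (\<lambda>u. \<gamma> x u + \<gamma> y u)"
  using iso_unfolded by (elim conjE) blast

lemma gamma_mult: "x \<in> tw_carrier S z \<Longrightarrow> y \<in> tw_carrier S z \<Longrightarrow>
    \<gamma> (B.tmult x y) = A.tmult (\<gamma> x) (\<gamma> y)"
  using iso_unfolded by (elim conjE) blast

lemma gamma_zero: "\<gamma> (\<lambda>u. 0) = (\<lambda>u. 0)"
proof
  fix u
  have "(\<lambda>u. 0::'d) \<in> tw_carrier S z" unfolding tw_carrier_def by simp
  from gamma_add[OF this this] have "\<gamma> (\<lambda>u. 0) = (\<lambda>u. \<gamma> (\<lambda>u. 0) u + \<gamma> (\<lambda>u. 0) u)"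
    by simp
  then have "\<gamma> (\<lambda>u. 0) u = \<gamma> (\<lambda>u. 0) u + \<gamma> (\<lambda>u. 0) u" by (rule fun_cong)
  then show "\<gamma> (\<lambda>u. 0) u = 0" by simp
qed

lemma gamma_inj: "x \<in> tw_carrier S z \<Longrightarrow> y \<in> tw_carrier S z \<Longrightarrow> \<gamma> x = \<gamma> y \<Longrightarrow> x = y"
  using bij_betw_imp_inj_on[OF gamma_bij] by (meson inj_onD)

lemma gamma_basis_nonzero:
  assumes s: "s \<in> S - {z}" and d: "d \<noteq> 0"
  shows "\<gamma> (basis_elt d s) \<noteq> (\<lambda>u. 0)"
proof
  assume "\<gamma> (basis_elt d s) = (\<lambda>u. 0)"
  then have "basis_elt d s = (\<lambda>u. 0)"
    using gamma_inj[OF basis_elt_carrier[OF s]] gamma_zero unfolding tw_carrier_def by simp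
  then show False using d fun_cong[of _ _ s] unfolding basis_elt_def by fastforce
qed

text \<open>\<open>phi s\<close> is any point of the support of \<open>\<gamma>(1 s)\<close>; lemma \<open>gamma_basis\<close> shows that
  it is the only one. Off \<open>S - {z}\<close> the map is the identity, so that \<open>phi z = z\<close>.\<close>

definition phi :: "'s \<Rightarrow> 's" where
  "phi s = (if s \<in> S - {z} then SOME u. \<gamma> (basis_elt 1 s) u \<noteq> 0 else s)"

definition eta :: "'s \<Rightarrow> 'd" where
  "eta s = \<gamma> (basis_elt 1 s) (phi s)"

definition mu :: "'s \<Rightarrow> 'd \<Rightarrow> 'd" where
  "mu e d = \<gamma> (basis_elt d e) (phi e)"

lemma gamma_idem: "e \<in> E \<Longrightarrow> phi e \<in> E \<and> \<gamma> (basis_elt 1 e) = basis_elt 1 (phi e)"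
proof -
  assume e: "e \<in> E"
  then obtain e' where e': "e' \<in> E" "\<gamma> (basis_elt 1 e) = basis_elt 1 e'"
    using idems_preserved by blast
  then have "phi e = e'"
    unfolding phi_def using e A.idem_in_carrier by (auto simp: basis_elt_def)
  then show ?thesis using e' by simp
qed

lemma phi_idem: "e \<in> E \<Longrightarrow> phi e \<in> E"
  using gamma_idem by blast

lemma gamma_basis_support:
  assumes s: "s \<in> S - {z}" and ef: "e \<in> E" "f \<in> E" "m e s = s" "m s f = s"
    and u: "\<gamma> (basis_elt d s) u \<noteq> 0"
  shows "u \<in> S - {z} \<and> m (phi e) u = u \<and> m u (phi f) = u"
proof -
  have ds: "basis_elt d s = B.tmult (B.tmult (basis_elt 1 e) (basis_elt d s)) (basis_elt 1 f)"
    unfolding B.tmult_idem_left[OF ef(1)] B.tmult_idem_right[OF ef(2)]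
    using s ef by (auto simp: basis_elt_def)
  have carrier: "basis_elt (c::'d) t \<in> tw_carrier S z" if "t \<in> E \<or> t = s" for c t
    using that s A.idem_in_carrier by (metis basis_elt_carrier)
  have "\<gamma> (basis_elt d s) = \<gamma> (B.tmult (B.tmult (basis_elt 1 e) (basis_elt d s)) (basis_elt 1 f))"
    using ds by (rule arg_cong)
  also have "\<dots> = A.tmult (\<gamma> (B.tmult (basis_elt 1 e) (basis_elt d s))) (\<gamma> (basis_elt 1 f))"
    using gamma_mult[OF tw_mult_carrier carrier] ef by blast
  also have "\<dots> = A.tmult (A.tmult (\<gamma> (basis_elt 1 e)) (\<gamma> (basis_elt d s))) (\<gamma> (basis_elt 1 f))"
    using gamma_mult[OF carrier carrier] ef by simp
  also have "\<dots> = (\<lambda>u. if u \<in> S - {z} \<and> m u (phi f) = u then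
      if u \<in> S - {z} \<and> m (phi e) u = u then \<gamma> (basis_elt d s) u else 0 else 0)"
    unfolding gamma_idem[OF ef(1), THEN conjunct2] gamma_idem[OF ef(2), THEN conjunct2]
      A.tmult_idem_left[OF gamma_idem[OF ef(1), THEN conjunct1]]
      A.tmult_idem_right[OF gamma_idem[OF ef(2), THEN conjunct1]] by simp
  finally have eq: "\<gamma> (basis_elt d s) u = (if u \<in> S - {z} \<and> m u (phi f) = u then
      if u \<in> S - {z} \<and> m (phi e) u = u then \<gamma> (basis_elt d s) u else 0 else 0)"
    by (rule fun_cong)
  show ?thesis
  proof (rule ccontr)
    assume "\<not> ?thesis"
    then have "\<gamma> (basis_elt d s) u = 0" by (subst eq) auto
    with u show False by contradiction
  qed
qed

lemma eta_nonzero: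
  assumes s: "s \<in> S - {z}" shows "eta s \<noteq> 0"
proof -
  have "\<exists>u. \<gamma> (basis_elt 1 s) u \<noteq> 0" using gamma_basis_nonzero[OF s, of 1] by auto
  from someI_ex[OF this] show ?thesis
    unfolding eta_def phi_def using s by simp
qed

lemma phi_block:
  assumes s: "s \<in> S - {z}" and ef: "e \<in> E" "f \<in> E" "m e s = s" "m s f = s"
  shows "phi s \<in> S - {z} \<and> m (phi e) (phi s) = phi s \<and> m (phi s) (phi f) = phi s"
  using eta_nonzero[OF s] unfolding eta_def by (rule gamma_basis_support[OF s ef])

lemma gamma_basis:
  assumes s: "s \<in> S - {z}"
  shows "\<gamma> (basis_elt d s) = basis_elt (\<gamma> (basis_elt d s) (phi s)) (phi s)"
proof
  fix u
  obtain e f where ef: "e \<in> E" "f \<in> E" "m e s = s" "m s f = s"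
    using A.exists_block[OF s] by blast
  have "\<gamma> (basis_elt d s) u = 0" if "u \<noteq> phi s"
  proof (rule ccontr)
    assume "\<gamma> (basis_elt d s) u \<noteq> 0"
    then have "u \<in> S - {z} \<and> m (phi e) u = u \<and> m u (phi f) = u"
      using gamma_basis_support[OF s ef] by blast
    moreover have "phi e \<in> E" "phi f \<in> E" using gamma_idem ef by simp_all
    ultimately have "u = phi s"
      using A.block_unique phi_block[OF s ef] by blast
    with that show False ..
  qed
  then show "\<gamma> (basis_elt d s) u = basis_elt (\<gamma> (basis_elt d s) (phi s)) (phi s) u"
    unfolding basis_elt_def by auto
qed

lemma gamma_basis_one: "s \<in> S - {z} \<Longrightarrow> \<gamma> (basis_elt 1 s) = basis_elt (eta s) (phi s)"
  unfolding eta_def by (rule gamma_basis)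

lemma gamma_basis_idem: "e \<in> E \<Longrightarrow> \<gamma> (basis_elt d e) = basis_elt (mu e d) (phi e)"
  unfolding mu_def by (rule gamma_basis[OF A.idem_in_carrier])

lemma mu_add:
  assumes e: "e \<in> E" shows "mu e (c + d) = mu e c + mu e d"
proof -
  have "basis_elt (c + d) e = (\<lambda>u. basis_elt c e u + basis_elt d e u)"
    by (auto simp: basis_elt_def)
  then have "\<gamma> (basis_elt (c + d) e) = \<gamma> (\<lambda>u. basis_elt c e u + basis_elt d e u)"
    by (rule arg_cong)
  also have "\<dots> = (\<lambda>u. \<gamma> (basis_elt c e) u + \<gamma> (basis_elt d e) u)"
    using A.idem_in_carrier[OF e] by (intro gamma_add basis_elt_carrier)
  finally show ?thesis unfolding mu_def by (rule fun_cong)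
qed

lemma mu_mult:
  assumes e: "e \<in> E" shows "mu e (c * d) = mu e c * mu e d"
proof -
  have carrier: "basis_elt x e \<in> tw_carrier S z" for x :: 'd
    using A.idem_in_carrier[OF e] by (rule basis_elt_carrier)
  have "basis_elt (c * d) e = B.tmult (basis_elt c e) (basis_elt d e)"
    using B.tmult_basis A.idem_in_carrier[OF e] A.idem[OF e] B.twist_idem[OF e]
      B.cocycle_idem[OF e] by simp
  then have "\<gamma> (basis_elt (c * d) e) = \<gamma> (B.tmult (basis_elt c e) (basis_elt d e))"
    by (rule arg_cong)
  also have "\<dots> = A.tmult (\<gamma> (basis_elt c e)) (\<gamma> (basis_elt d e))"
    by (rule gamma_mult[OF carrier carrier])
  also have "\<dots> = basis_elt (mu e c * mu e d) (phi e)"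
    using A.tmult_basis A.idem_in_carrier[OF phi_idem[OF e]] A.idem[OF phi_idem[OF e]]
      A.twist_idem[OF phi_idem[OF e]] A.cocycle_idem[OF phi_idem[OF e]]
    unfolding gamma_basis_idem[OF e] by simp
  finally show ?thesis
    unfolding gamma_basis_idem[OF e] basis_elt_eq_iff by simp
qed

lemma mu_inj:
  assumes e: "e \<in> E" shows "inj (mu e)"
proof (rule injI)
  fix c d assume "mu e c = mu e d"
  then have "\<gamma> (basis_elt c e) = \<gamma> (basis_elt d e)" by (simp add: gamma_basis_idem[OF e])
  then have "basis_elt c e = basis_elt d e"
    using gamma_inj basis_elt_carrier[OF A.idem_in_carrier[OF e]] by blast
  then show "c = d" by (simp add: basis_elt_eq_iff)
qed

lemma mu_surj:
  assumes e: "e \<in> E" shows "surj (mu e)"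
proof -
  have carrier: "basis_elt x t \<in> tw_carrier S z" if "t \<in> E" for x :: 'd and t
    using A.idem_in_carrier[OF that] by (rule basis_elt_carrier)
  have "c \<in> range (mu e)" for c
  proof -
    \<comment> \<open>a preimage of \<open>c \<cdot> phi e\<close> may be cut down to the corner \<open>e R e = D e\<close>\<close>
    obtain x where x: "x \<in> tw_carrier S z" "\<gamma> x = basis_elt c (phi e)"
      using bij_betw_imp_surj_on[OF gamma_bij] carrier[OF phi_idem[OF e]] by (metis imageE)
    let ?x' = "B.tmult (B.tmult (basis_elt 1 e) x) (basis_elt 1 e)"
    have "\<gamma> ?x' = A.tmult (\<gamma> (B.tmult (basis_elt 1 e) x)) (\<gamma> (basis_elt 1 e))"
      by (rule gamma_mult[OF tw_mult_carrier carrier[OF e]])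
    also have "\<dots> = A.tmult (A.tmult (\<gamma> (basis_elt 1 e)) (\<gamma> x)) (\<gamma> (basis_elt 1 e))"
      by (simp only: gamma_mult[OF carrier[OF e] x(1)])
    also have "\<dots> = \<gamma> x"
      unfolding gamma_idem[OF e, THEN conjunct2] A.tmult_idem_corner[OF phi_idem[OF e]] x(2)
      by (simp add: basis_elt_def)
    finally have "?x' = x" using gamma_inj[OF tw_mult_carrier x(1)] by blast
    then have "basis_elt (x e) e = x" by (simp only: B.tmult_idem_corner[OF e])
    then have "mu e (x e) = \<gamma> x (phi e)"
      unfolding mu_def by (rule arg_cong[where f = "\<lambda>y. \<gamma> y (phi e)"])
    also have "\<dots> = c" unfolding x(2) by (simp add: basis_elt_def)
    finally show ?thesis by (rule range_eqI[OF sym])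
  qed
  then show ?thesis by blast
qed

lemma mu_ring_aut: "e \<in> E \<Longrightarrow> ring_aut (mu e)"
  unfolding ring_aut_def bij_def using mu_add mu_mult mu_inj mu_surj by blast

lemma phi_nonzero: "s \<in> S - {z} \<Longrightarrow> phi s \<in> S - {z}"
  using phi_block A.exists_block by blast

lemma phi_zero: "phi z = z"
  unfolding phi_def by simp

lemma phi_carrier: "s \<in> S \<Longrightarrow> phi s \<in> S"
  using phi_nonzero phi_zero A.zero_left by (cases "s = z") auto

lemma gamma_basis_eq:
  assumes s: "s \<in> S - {z}"
  shows "\<gamma> (basis_elt d s) = basis_elt (mu (left_idem m E s) d * eta s) (phi s)"
proof -
  define e where "e = left_idem m E s"
  have e: "e \<in> E" "m e s = s" using A.left_idem[OF s] unfolding e_def by auto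
  obtain f where f: "f \<in> E" "m s f = s" using A.exists_block[OF s] by blast
  have pe: "phi e \<in> E" "m (phi e) (phi s) = phi s"
    using phi_idem phi_block[OF s e(1) f(1) e(2) f(2)] e by auto
  have "basis_elt d s = B.tmult (basis_elt d e) (basis_elt 1 s)"
    using B.tmult_basis[OF A.idem_in_carrier[OF e(1)] s] s e B.twist_idem B.cocycle_idem_left
    by simp
  then have "\<gamma> (basis_elt d s) = \<gamma> (B.tmult (basis_elt d e) (basis_elt 1 s))"
    by (rule arg_cong)
  also have "\<dots> = A.tmult (\<gamma> (basis_elt d e)) (\<gamma> (basis_elt 1 s))"
    using basis_elt_carrier[OF A.idem_in_carrier[OF e(1)]] basis_elt_carrier[OF s]
    by (rule gamma_mult)
  also have "\<dots> = basis_elt (mu e d * eta s) (phi s)"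
    unfolding gamma_basis_idem[OF e(1)] gamma_basis_one[OF s]
    using A.tmult_basis[OF A.idem_in_carrier[OF pe(1)] phi_nonzero[OF s]] phi_nonzero[OF s] pe
      A.twist_idem A.cocycle_idem_left by simp
  finally show ?thesis unfolding e_def .
qed

lemma gamma_basis_coeff_nonzero:
  assumes s: "s \<in> S - {z}" and d: "d \<noteq> 0"
  shows "mu (left_idem m E s) d * eta s \<noteq> 0"
proof -
  have "mu (left_idem m E s) d \<noteq> 0"
    using ring_aut_nonzero[OF mu_ring_aut[OF A.left_idem[OF s, THEN conjunct1]] d] .
  then show ?thesis using eta_nonzero[OF s] by simp
qed

lemma phi_mult:
  assumes st: "s \<in> S" "t \<in> S"
  shows "phi (m s t) = m (phi s) (phi t)"
proof (cases "s = z \<or> t = z")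
  case True
  then show ?thesis using st phi_zero phi_carrier A.zero_left A.zero_right by auto
next
  case False
  then have s: "s \<in> S - {z}" and t: "t \<in> S - {z}" using st by auto
  let ?c = "if m (phi s) (phi t) = z then 0 else eta s * \<alpha> (phi s) (eta t) * \<xi> (phi s) (phi t)"
  have "B.tmult (basis_elt 1 s) (basis_elt 1 t) = basis_elt (if m s t = z then 0 else \<zeta> s t) (m s t)"
    using B.tmult_basis[OF s t] ring_aut_one[OF B.twist_ring_aut[OF s]] by simp
  then have "\<gamma> (basis_elt (if m s t = z then 0 else \<zeta> s t) (m s t)) =
      \<gamma> (B.tmult (basis_elt 1 s) (basis_elt 1 t))" by simp
  also have "\<dots> = A.tmult (\<gamma> (basis_elt 1 s)) (\<gamma> (basis_elt 1 t))"
    by (rule gamma_mult[OF basis_elt_carrier[OF s] basis_elt_carrier[OF t]])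
  also have "\<dots> = basis_elt ?c (m (phi s) (phi t))"
    unfolding gamma_basis_one[OF s] gamma_basis_one[OF t]
    by (rule A.tmult_basis[OF phi_nonzero[OF s] phi_nonzero[OF t]])
  finally have prod: "\<gamma> (basis_elt (if m s t = z then 0 else \<zeta> s t) (m s t)) =
      basis_elt ?c (m (phi s) (phi t))" .
  have c: "?c \<noteq> 0" if "m (phi s) (phi t) \<noteq> z"
    using that eta_nonzero[OF s] eta_nonzero[OF t] phi_nonzero[OF s] phi_nonzero[OF t]
      ring_aut_nonzero[OF A.twist_ring_aut[OF phi_nonzero[OF s]]]
      A.cocycle_nonzero[of "phi s" "phi t"] by auto
  show ?thesis
  proof (cases "m s t = z")
    case True
    then have "basis_elt ?c (m (phi s) (phi t)) = (\<lambda>u. 0)" using prod gamma_zero by simp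
    then have "?c = 0" by (simp only: basis_elt_eq_zero_iff)
    then have "m (phi s) (phi t) = z" using c by blast
    then show ?thesis using True phi_zero by simp
  next
    case False
    then have st': "m s t \<in> S - {z}" using st A.closed by blast
    have "basis_elt (mu (left_idem m E (m s t)) (\<zeta> s t) * eta (m s t)) (phi (m s t)) =
        basis_elt ?c (m (phi s) (phi t))"
      using prod False gamma_basis_eq[OF st'] by simp
    moreover have "mu (left_idem m E (m s t)) (\<zeta> s t) * eta (m s t) \<noteq> 0"
      by (rule gamma_basis_coeff_nonzero[OF st' B.cocycle_nonzero[OF st False]])
    ultimately show ?thesis unfolding basis_elt_eq_iff by blast
  qed
qed

lemma phi_eq_zero_iff: "s \<in> S \<Longrightarrow> phi s = z \<longleftrightarrow> s = z"
  using phi_zero phi_nonzero[of s] by auto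

lemma phi_inj: "inj_on phi S"
proof (rule inj_onI)
  fix s t assume st: "s \<in> S" "t \<in> S" "phi s = phi t"
  show "s = t"
  proof (cases "s = z \<or> t = z")
    case True
    moreover have "phi s = z \<longleftrightarrow> s = z" "phi t = z \<longleftrightarrow> t = z"
      using st phi_eq_zero_iff by blast+
    ultimately show ?thesis using st(3) by auto
  next
    case False
    then have s: "s \<in> S - {z}" and t: "t \<in> S - {z}" using st by auto
    define e where "e = left_idem m E s"
    have e: "e \<in> E" using A.left_idem[OF s] unfolding e_def by blast
    obtain d where d: "mu e d = eta t * inverse (eta s)"
      using mu_surj[OF e] by (metis surjD)
    have "\<gamma> (basis_elt d s) = \<gamma> (basis_elt 1 t)"
      using gamma_basis_eq[OF s, of d] gamma_basis_one[OF t] d eta_nonzero[OF s] st(3)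
      unfolding e_def by (simp add: mult.assoc)
    then have "basis_elt d s = basis_elt 1 t"
      by (rule gamma_inj[OF basis_elt_carrier[OF s] basis_elt_carrier[OF t]])
    then show ?thesis by (auto simp: basis_elt_eq_iff)
  qed
qed

lemma phi_semigroup_aut: "semigroup_aut S m phi"
proof -
  have "phi ` S \<subseteq> S" using phi_carrier by blast
  then have "phi ` S = S" by (rule endo_inj_surj[OF A.finite_carrier _ phi_inj])
  then show ?thesis
    unfolding semigroup_aut_def bij_betw_def using phi_inj phi_mult by blast
qed

end

theorem mainTheorem2:
  fixes S :: "'s set" and m :: "'s \<Rightarrow> 's \<Rightarrow> 's" and z :: 's and E :: "'s set"
    and \<alpha> \<beta> :: "'s \<Rightarrow> 'd::division_ring \<Rightarrow> 'd" and \<xi> \<zeta> :: "'s \<Rightarrow> 's \<Rightarrow> 'd"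
    and \<gamma> :: "('s \<Rightarrow> 'd) \<Rightarrow> ('s \<Rightarrow> 'd)"
  assumes "square_free_semigroup S m z E"
    and "two_cocycle S m z \<alpha> \<xi>" and "normal_cocycle E \<alpha> \<xi>"
    and "two_cocycle S m z \<beta> \<zeta>" and "normal_cocycle E \<beta> \<zeta>"
    and "tw_ring_iso S m z \<beta> \<zeta> \<alpha> \<xi> \<gamma>"
    and "(\<lambda>e. \<gamma> (basis_elt 1 e)) ` E = (\<lambda>e. basis_elt 1 e) ` E"
  shows "\<exists>\<phi> \<mu> \<eta>. semigroup_aut S m \<phi> \<and>
           (\<forall>e\<in>E. ring_aut (\<mu> e)) \<and> (\<forall>s\<in>S - {z}. \<eta> s \<noteq> (0::'d)) \<and>
           (\<forall>d::'d. \<forall>s\<in>S - {z}.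
              \<gamma> (basis_elt d s) = basis_elt (\<mu> (left_idem m E s) d * \<eta> s) (\<phi> s))"
proof -
  interpret twisted_ring_iso S m z E \<alpha> \<beta> \<xi> \<zeta> \<gamma>
    by unfold_locales (rule assms)+
  show ?thesis
  proof (intro exI conjI ballI allI)
    show "semigroup_aut S m phi" by (rule phi_semigroup_aut)
    show "ring_aut (mu e)" if "e \<in> E" for e using that by (rule mu_ring_aut)
    show "eta s \<noteq> 0" if "s \<in> S - {z}" for s using that by (rule eta_nonzero)
    show "\<gamma> (basis_elt d s) = basis_elt (mu (left_idem m E s) d * eta s) (phi s)"
      if "s \<in> S - {z}" for d s using that by (rule gamma_basis_eq)
  qed
qed

end
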